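(* Let $\{S;\tilde w_1,\dots,\tilde w_N;p_1,\dots,p_N\}$ be a DIFS with associated Markov chain $\{\tilde X_k\}$, and let $C\subset S$ be nonempty. (a) $C$ is a closed class of $\{\tilde X_k\}$ if and only if $\bigcup_{i=1}^N\tilde w_i(C)\subset C$. (b) If $C$ is a communication class of $\{\tilde X_k\}$, then $\bigcup_{i=1}^N\tilde w_i(C)\supset C$.
   Context: $\mathcal D^n(\delta)=\{\delta m:m\in\mathbb Z^n\}$ for fixed $\delta>0$. A DIFS $\{S;\tilde w_1,\dots,\tilde w_N;p_1,\dots,p_N\}$ consists of $S\subset\mathcal D^n(\delta)$, maps $\tilde w_i:S\to S$, and functions $p_i:S\to(0,1]$ with $\sum_ip_i(\tilde x)=1$ for every $\tilde x\in S$; its associated Markov chain on $S$ has transition probabilities $P(\tilde x,\tilde y)=\sum_ip_i(\tilde x)\mathbf 1_{\{\tilde y\}}(\tilde w_i(\tilde x))$. A state $\tilde y$ is accessible from $\tilde x$ if $P^k(\tilde x,\tilde y)>0$ for some integer $k\ge1$. A communication class is a maximal nonempty subset $C$ such that for all $\tilde x,\tilde y\in C$ (not necessarily distinct) $\tilde y$ is accessible from $\tilde x$. A closed class is a nonempty subset $C$ such that every state accessible from a state of $C$ belongs to $C$. *)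

theory Defs
  imports "HOL-Analysis.Analysis"
begin

definition lattice :: "real \<Rightarrow> (real ^ 'n) set" where
  "lattice \<delta> = {x. \<exists>m :: int ^ 'n. \<forall>j. x $ j = \<delta> * of_int (m $ j)}"

definition DIFS ::
  "real \<Rightarrow> (real ^ 'n) set \<Rightarrow> nat \<Rightarrow> (nat \<Rightarrow> real ^ 'n \<Rightarrow> real ^ 'n)
     \<Rightarrow> (nat \<Rightarrow> real ^ 'n \<Rightarrow> real) \<Rightarrow> bool" where
  "DIFS \<delta> S N w p \<longleftrightarrow>
     \<delta> > 0 \<and> S \<subseteq> lattice \<delta> \<and>
     (\<forall>i\<in>{1..N}. \<forall>x\<in>S. w i x \<in> S) \<and>
     (\<forall>i\<in>{1..N}. \<forall>x\<in>S. 0 < p i x \<and> p i x \<le> 1) \<and>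
     (\<forall>x\<in>S. (\<Sum>i=1..N. p i x) = 1)"

definition trans_prob ::
  "nat \<Rightarrow> (nat \<Rightarrow> 'a \<Rightarrow> 'a) \<Rightarrow> (nat \<Rightarrow> 'a \<Rightarrow> real) \<Rightarrow> 'a \<Rightarrow> 'a \<Rightarrow> real" where
  "trans_prob N w p x y = (\<Sum>i=1..N. p i x * (if w i x = y then 1 else 0))"

text \<open>k-step transition probabilities P^k (matrix powers); the sum in the matrix product
  P^(k+1)(x,y) = sum_z P(x,z) P^k(z,y) is restricted to the finitely many z with P(x,z) possibly
  nonzero, i.e. z among w_1(x),...,w_N(x).\<close>
fun trans_pow ::
  "nat \<Rightarrow> (nat \<Rightarrow> 'a \<Rightarrow> 'a) \<Rightarrow> (nat \<Rightarrow> 'a \<Rightarrow> real) \<Rightarrow> nat \<Rightarrow> 'a \<Rightarrow> 'a \<Rightarrow> real" where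
  "trans_pow N w p 0 x y = (if x = y then 1 else 0)"
| "trans_pow N w p (Suc k) x y =
     (\<Sum>z\<in>(\<lambda>i. w i x) ` {1..N}. trans_prob N w p x z * trans_pow N w p k z y)"

definition accessible ::
  "nat \<Rightarrow> (nat \<Rightarrow> 'a \<Rightarrow> 'a) \<Rightarrow> (nat \<Rightarrow> 'a \<Rightarrow> real) \<Rightarrow> 'a \<Rightarrow> 'a \<Rightarrow> bool" where
  "accessible N w p x y \<longleftrightarrow> (\<exists>k\<ge>1. trans_pow N w p k x y > 0)"

definition closed_class ::
  "'a set \<Rightarrow> nat \<Rightarrow> (nat \<Rightarrow> 'a \<Rightarrow> 'a) \<Rightarrow> (nat \<Rightarrow> 'a \<Rightarrow> real) \<Rightarrow> 'a set \<Rightarrow> bool" where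
  "closed_class S N w p C \<longleftrightarrow> C \<noteq> {} \<and> C \<subseteq> S \<and>
     (\<forall>x\<in>C. \<forall>y\<in>S. accessible N w p x y \<longrightarrow> y \<in> C)"

definition communicating ::
  "nat \<Rightarrow> (nat \<Rightarrow> 'a \<Rightarrow> 'a) \<Rightarrow> (nat \<Rightarrow> 'a \<Rightarrow> real) \<Rightarrow> 'a set \<Rightarrow> bool" where
  "communicating N w p C \<longleftrightarrow> C \<noteq> {} \<and> (\<forall>x\<in>C. \<forall>y\<in>C. accessible N w p x y)"

definition communication_class ::
  "'a set \<Rightarrow> nat \<Rightarrow> (nat \<Rightarrow> 'a \<Rightarrow> 'a) \<Rightarrow> (nat \<Rightarrow> 'a \<Rightarrow> real) \<Rightarrow> 'a set \<Rightarrow> bool" where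
  "communication_class S N w p C \<longleftrightarrow> C \<subseteq> S \<and> communicating N w p C \<and>
     (\<forall>D. C \<subseteq> D \<and> D \<subseteq> S \<and> communicating N w p D \<longrightarrow> D = C)"

end

theory Submission
  imports Defs
begin

text \<open>Since all probabilities are positive, \<open>P\<^sup>k(x, y) > 0\<close> exactly when \<open>y\<close> is reached from
  \<open>x\<close> by \<open>k\<close> applications of the maps \<open>w\<^sub>i\<close>; hence accessibility is the transitive closure of
  the graph \<open>x \<rightarrow> w\<^sub>i(x)\<close>. A set is closed under the transitive closure iff it is closed under
  single steps, which gives (a). For (b), a state \<open>y\<close> of a communication class \<open>C\<close> is accessible
  from itself, so it has a predecessor \<open>z\<close> with \<open>z \<rightarrow> y\<close> and \<open>y \<rightarrow>\<^sup>* z\<close>; then \<open>C \<union> {z}\<close> still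
  communicates, and maximality of \<open>C\<close> forces \<open>z \<in> C\<close>.\<close>

lemma Image_subset_iff_trancl_Image_subset: "r `` A \<subseteq> A \<longleftrightarrow> r\<^sup>+ `` A \<subseteq> A"
proof
  assume "r `` A \<subseteq> A"
  then have "r\<^sup>* `` A = A" by (rule Image_closed_trancl)
  moreover have "r\<^sup>+ `` A \<subseteq> r\<^sup>* `` A" by (rule Image_mono) auto
  ultimately show "r\<^sup>+ `` A \<subseteq> A" by simp
next
  assume "r\<^sup>+ `` A \<subseteq> A"
  moreover have "r `` A \<subseteq> r\<^sup>+ `` A" by (rule Image_mono) auto
  ultimately show "r `` A \<subseteq> A" by simp
qed

lemma maximal_trancl_clique_subset_Image:
  assumes r: "r \<subseteq> S \<times> S" and "C \<subseteq> S"
    and clique: "\<forall>x\<in>C. \<forall>y\<in>C. (x, y) \<in> r\<^sup>+"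
    and maximal: "\<And>D. C \<subseteq> D \<Longrightarrow> D \<subseteq> S \<Longrightarrow> \<forall>x\<in>D. \<forall>y\<in>D. (x, y) \<in> r\<^sup>+ \<Longrightarrow> D = C"
  shows "C \<subseteq> r `` C"
proof
  fix y assume y: "y \<in> C"
  then have "(y, y) \<in> r\<^sup>+" using clique by blast
  then obtain z where yz: "(y, z) \<in> r\<^sup>*" and zy: "(z, y) \<in> r" by (blast dest: tranclD2)
  have "\<forall>a\<in>insert z C. \<forall>b\<in>insert z C. (a, b) \<in> r\<^sup>+"
  proof (intro ballI)
    fix a b assume a: "a \<in> insert z C" and b: "b \<in> insert z C"
    have "(a, y) \<in> r\<^sup>+" using a y zy clique by auto
    moreover have "(y, b) \<in> r\<^sup>*" using b y yz clique by (metis insert_iff trancl_into_rtrancl)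
    ultimately show "(a, b) \<in> r\<^sup>+" by (rule trancl_rtrancl_trancl)
  qed
  moreover have "z \<in> S" using zy r by blast
  ultimately have "insert z C = C" using maximal \<open>C \<subseteq> S\<close> by blast
  then show "y \<in> r `` C" using zy by blast
qed

definition step_rel :: "'a set \<Rightarrow> nat \<Rightarrow> (nat \<Rightarrow> 'a \<Rightarrow> 'a) \<Rightarrow> ('a \<times> 'a) set" where
  "step_rel S N w = {(x, w i x) | x i. x \<in> S \<and> i \<in> {1..N}}"

lemma step_rel_Image:
  "C \<subseteq> S \<Longrightarrow> step_rel S N w `` C = (\<Union>i\<in>{1..N}. w i ` C)"
  unfolding step_rel_def by blast

locale positive_IFS =
  fixes S :: "'a set" and N :: nat and w :: "nat \<Rightarrow> 'a \<Rightarrow> 'a" and p :: "nat \<Rightarrow> 'a \<Rightarrow> real"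
  assumes maps_into: "\<And>i x. i \<in> {1..N} \<Longrightarrow> x \<in> S \<Longrightarrow> w i x \<in> S"
    and prob_pos: "\<And>i x. i \<in> {1..N} \<Longrightarrow> x \<in> S \<Longrightarrow> 0 < p i x"
begin

lemma step_rel_subset: "step_rel S N w \<subseteq> S \<times> S"
  unfolding step_rel_def using maps_into by blast

lemma trans_prob_pos: "i \<in> {1..N} \<Longrightarrow> x \<in> S \<Longrightarrow> 0 < trans_prob N w p x (w i x)"
  unfolding trans_prob_def
  by (rule sum_pos2[of _ i]) (auto simp: prob_pos less_imp_le)

lemma trans_pow_nonneg: "x \<in> S \<Longrightarrow> 0 \<le> trans_pow N w p k x y"
proof (induction k arbitrary: x)
  case (Suc k)
  have "0 \<le> trans_prob N w p x (w i x) * trans_pow N w p k (w i x) y" if "i \<in> {1..N}" for i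
    using trans_prob_pos[OF that Suc.prems] Suc.IH[OF maps_into[OF that Suc.prems]] by simp
  then show ?case by (auto intro: sum_nonneg)
qed simp

lemma trans_pow_Suc_pos_iff:
  assumes "x \<in> S"
  shows "0 < trans_pow N w p (Suc k) x y \<longleftrightarrow> (\<exists>i\<in>{1..N}. 0 < trans_pow N w p k (w i x) y)"
proof -
  let ?term = "\<lambda>z. trans_prob N w p x z * trans_pow N w p k z y"
  have pos_iff: "0 < ?term (w i x) \<longleftrightarrow> 0 < trans_pow N w p k (w i x) y" if "i \<in> {1..N}" for i
    using trans_prob_pos[OF that assms] by (simp add: zero_less_mult_iff)
  have nonneg: "0 \<le> ?term z" if z: "z \<in> (\<lambda>i. w i x) ` {1..N}" for z
  proof -
    obtain i where i: "i \<in> {1..N}" and "z = w i x" using z by blast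
    then show ?thesis
      using trans_prob_pos[OF i assms] trans_pow_nonneg[OF maps_into[OF i assms]] by simp
  qed
  have "0 < sum ?term ((\<lambda>i. w i x) ` {1..N}) \<longleftrightarrow> sum ?term ((\<lambda>i. w i x) ` {1..N}) \<noteq> 0"
    using nonneg sum_nonneg[of _ ?term] by (simp add: less_le)
  also have "\<dots> \<longleftrightarrow> (\<exists>z\<in>(\<lambda>i. w i x) ` {1..N}. 0 < ?term z)"
    using nonneg by (simp add: sum_nonneg_eq_0_iff less_le)
  finally show ?thesis using pos_iff by auto
qed

lemma trans_pow_pos_iff_relpow:
  "x \<in> S \<Longrightarrow> 0 < trans_pow N w p k x y \<longleftrightarrow> (x, y) \<in> step_rel S N w ^^ k"
proof (induction k arbitrary: x)
  case (Suc k)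
  have "0 < trans_pow N w p (Suc k) x y \<longleftrightarrow> (\<exists>i\<in>{1..N}. (w i x, y) \<in> step_rel S N w ^^ k)"
    using trans_pow_Suc_pos_iff Suc maps_into by auto
  also have "\<dots> \<longleftrightarrow> (\<exists>z. (x, z) \<in> step_rel S N w \<and> (z, y) \<in> step_rel S N w ^^ k)"
    unfolding step_rel_def using Suc.prems by blast
  also have "\<dots> \<longleftrightarrow> (x, y) \<in> step_rel S N w ^^ Suc k"
    by (blast intro: relpow_Suc_I2 dest: relpow_Suc_D2)
  finally show ?case .
qed simp

lemma accessible_iff_trancl: "x \<in> S \<Longrightarrow> accessible N w p x y \<longleftrightarrow> (x, y) \<in> (step_rel S N w)\<^sup>+"
  unfolding accessible_def trancl_power by (auto simp: trans_pow_pos_iff_relpow Suc_le_eq)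

lemma closed_class_iff_image_subset:
  assumes "C \<noteq> {}" and "C \<subseteq> S"
  shows "closed_class S N w p C \<longleftrightarrow> (\<Union>i\<in>{1..N}. w i ` C) \<subseteq> C"
proof -
  have "closed_class S N w p C \<longleftrightarrow> (\<forall>x\<in>C. \<forall>y\<in>S. (x, y) \<in> (step_rel S N w)\<^sup>+ \<longrightarrow> y \<in> C)"
    using assms by (auto simp: closed_class_def accessible_iff_trancl subset_iff)
  also have "\<dots> \<longleftrightarrow> (step_rel S N w)\<^sup>+ `` C \<subseteq> C"
    using trancl_subset_Sigma[OF step_rel_subset] by blast
  also have "\<dots> \<longleftrightarrow> (\<Union>i\<in>{1..N}. w i ` C) \<subseteq> C"
    using assms by (simp add: Image_subset_iff_trancl_Image_subset[symmetric] step_rel_Image)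
  finally show ?thesis .
qed

lemma communication_class_subset_image:
  assumes "communication_class S N w p C"
  shows "C \<subseteq> (\<Union>i\<in>{1..N}. w i ` C)"
proof -
  have "C \<subseteq> S" using assms by (simp add: communication_class_def)
  have communicating_iff: "communicating N w p D \<longleftrightarrow> D \<noteq> {} \<and> (\<forall>x\<in>D. \<forall>y\<in>D. (x, y) \<in> (step_rel S N w)\<^sup>+)"
    if "D \<subseteq> S" for D
    using that by (auto simp: communicating_def accessible_iff_trancl subset_iff)
  have "C \<subseteq> step_rel S N w `` C"
  proof (rule maximal_trancl_clique_subset_Image[OF step_rel_subset \<open>C \<subseteq> S\<close>])
    show "\<forall>x\<in>C. \<forall>y\<in>C. (x, y) \<in> (step_rel S N w)\<^sup>+"
      using assms communicating_iff[OF \<open>C \<subseteq> S\<close>] by (simp add: communication_class_def)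
  next
    fix D assume D: "C \<subseteq> D" "D \<subseteq> S" and "\<forall>x\<in>D. \<forall>y\<in>D. (x, y) \<in> (step_rel S N w)\<^sup>+"
    moreover have "C \<noteq> {}" using assms by (simp add: communication_class_def communicating_def)
    ultimately have "communicating N w p D" using communicating_iff[OF D(2)] by blast
    then show "D = C" using assms D unfolding communication_class_def by blast
  qed
  then show ?thesis using \<open>C \<subseteq> S\<close> by (simp add: step_rel_Image)
qed

end

lemma DIFS_imp_positive_IFS:
  assumes "DIFS \<delta> S N w p"
  shows "positive_IFS S N w p"
proof
  fix i x assume "i \<in> {1..N}" and "x \<in> S"
  then show "w i x \<in> S" and "0 < p i x"
    using assms by (simp_all add: DIFS_def)
qed

theorem theorem11:
  fixes \<delta> :: real and S C :: "(real ^ 'n) set" and N :: nat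
    and w :: "nat \<Rightarrow> real ^ 'n \<Rightarrow> real ^ 'n" and p :: "nat \<Rightarrow> real ^ 'n \<Rightarrow> real"
  assumes "DIFS \<delta> S N w p" and "C \<subseteq> S" and "C \<noteq> {}"
  shows "(closed_class S N w p C \<longleftrightarrow> (\<Union>i\<in>{1..N}. w i ` C) \<subseteq> C)
       \<and> (communication_class S N w p C \<longrightarrow> C \<subseteq> (\<Union>i\<in>{1..N}. w i ` C))"
proof -
  interpret positive_IFS S N w p
    using assms(1) by (rule DIFS_imp_positive_IFS)
  show ?thesis
    using closed_class_iff_image_subset[OF assms(3,2)] communication_class_subset_image by simp
qed

end
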